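(* Let $c>0$. There is a constant $\delta=\delta(c)>0$ such that the following holds. Let $p\ge 2$ and let $\mathcal{F}$ be a finite family of $n\ge 1$ nonempty subsets of $\mathbb{R}^d$ whose dual hypergraph has a hereditarily $c$-linear Delaunay graph and which satisfies the $(p,2)$-property. Then there is a point $x\in\mathbb{R}^d$ contained in at least $\delta\, n/p$ members of $\mathcal{F}$.
   Context: A hypergraph $H=(V,\mathcal{E})$ consists of a finite vertex set $V$ and a collection $\mathcal{E}$ of subsets of $V$. For $S\subseteq V$, $H|_S=(S,\{e\cap S: e\in\mathcal{E}\})$. The Delaunay graph of $H$ is the graph on $V$ whose edges are the hyperedges of size exactly $2$. $H$ has a hereditarily $c$-linear Delaunay graph if for every nonempty $S\subseteq V$ the Delaunay graph of $H|_S$ has fewer than $c|S|$ edges. The dual hypergraph of a family $\mathcal{F}$ of subsets of $\mathbb{R}^d$ has vertex set $\mathcal{F}$ and, for each $x\in\mathbb{R}^d$, the hyperedge $e_x=\{B\in\mathcal{F}: x\in B\}$. $\mathcal{F}$ satisfies the $(p,2)$-property if among any $p$ members of $\mathcal{F}$ some two have nonempty intersection. *)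

theory Defs
  imports Main Complex_Main
begin

text \<open>Euclidean space R^d, represented (so that d can be quantified inside a formula)
  as the real sequences vanishing from index d on; coordinates are indices 0..d-1.\<close>
definition Rn :: "nat \<Rightarrow> (nat \<Rightarrow> real) set" where
  "Rn d = {x. \<forall>i\<ge>d. x i = 0}"

definition restrict_hg :: "'v set set \<Rightarrow> 'v set \<Rightarrow> 'v set set" where
  "restrict_hg E S = {e \<inter> S | e. e \<in> E}"

definition delaunay_edges :: "'v set set \<Rightarrow> 'v set set" where
  "delaunay_edges E = {e \<in> E. card e = 2}"

definition hered_c_linear_delaunay :: "real \<Rightarrow> 'v set \<Rightarrow> 'v set set \<Rightarrow> bool" where
  "hered_c_linear_delaunay c V E \<longleftrightarrow>
     (\<forall>S. S \<subseteq> V \<and> S \<noteq> {} \<longrightarrow>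
        real (card (delaunay_edges (restrict_hg E S))) < c * real (card S))"

definition dual_edges :: "nat \<Rightarrow> (nat \<Rightarrow> real) set set \<Rightarrow> (nat \<Rightarrow> real) set set set" where
  "dual_edges d F = {{B \<in> F. x \<in> B} | x. x \<in> Rn d}"

definition p2_property :: "nat \<Rightarrow> 'a set set \<Rightarrow> bool" where
  "p2_property p F \<longleftrightarrow>
     (\<forall>G. G \<subseteq> F \<and> card G = p \<longrightarrow> (\<exists>A\<in>G. \<exists>B\<in>G. A \<noteq> B \<and> A \<inter> B \<noteq> {}))"

end

theory Submission
  imports Defs
begin

(* Let k be the largest depth of a point, i.e. the largest hyperedge of the dual hypergraph.
   A Clarkson-Shor sampling argument shows that every subfamily S has at most 8ck|S| ordered
   intersecting pairs: keep each member of S independently with probability q = 1/(2k); two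
   members meeting at x become a Delaunay edge of the sample whenever they are the only sampled
   members containing x, which happens with probability at least q^2/2, whereas a sample U
   spans fewer than c|U| Delaunay edges. Hence the intersection graph of F is 8ck-degenerate
   and F has a pairwise disjoint subfamily of at least n/(8ck+1) members. By the
   (p,2)-property such a subfamily has fewer than p members, so k >= n/((8c+1)p). *)

(* The probability that a random subset of S, containing each element independently with
   probability q, equals U. *)
definition subset_weight :: "real \<Rightarrow> 'a set \<Rightarrow> 'a set \<Rightarrow> real" where
  "subset_weight q S U = q ^ card U * (1 - q) ^ card (S - U)"

lemma sum_subset_weight_trace:
  assumes "finite S" "E \<subseteq> S" "T \<subseteq> E"
  shows "(\<Sum>U | U \<subseteq> S \<and> U \<inter> E = T. subset_weight q S U) = q ^ card T * (1 - q) ^ card (E - T)"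
proof -
  have total: "(\<Sum>V\<in>Pow (S - E). q ^ card V * (1 - q) ^ card (S - E - V)) = 1"
    using prod_add[of "S - E" "\<lambda>_. q" "\<lambda>_. 1 - q"] assms(1) by simp
  have inj: "inj_on ((\<union>) T) (Pow (S - E))"
    using assms(3) by (auto intro!: inj_onI)
  have image: "(\<union>) T ` Pow (S - E) = {U. U \<subseteq> S \<and> U \<inter> E = T}"
  proof
    show "{U. U \<subseteq> S \<and> U \<inter> E = T} \<subseteq> (\<union>) T ` Pow (S - E)"
    proof
      fix U assume "U \<in> {U. U \<subseteq> S \<and> U \<inter> E = T}"
      then have "U = T \<union> (U - E)" "U - E \<in> Pow (S - E)" by auto
      then show "U \<in> (\<union>) T ` Pow (S - E)" by blast
    qed
  qed (use assms in auto)
  have weight: "subset_weight q S (T \<union> V)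
      = q ^ card T * (1 - q) ^ card (E - T) * (q ^ card V * (1 - q) ^ card (S - E - V))"
    if "V \<in> Pow (S - E)" for V
  proof -
    have fin: "finite T" "finite V" "finite (E - T)" "finite (S - E - V)"
      using that assms by (auto intro: finite_subset)
    have "card (T \<union> V) = card T + card V"
      using that assms fin by (intro card_Un_disjoint) auto
    moreover have "card (S - (T \<union> V)) = card (E - T) + card (S - E - V)"
    proof -
      have "S - (T \<union> V) = (E - T) \<union> (S - E - V)" using that assms by auto
      moreover have "(E - T) \<inter> (S - E - V) = {}" by blast
      ultimately show ?thesis using fin by (simp add: card_Un_disjoint)
    qed
    ultimately show ?thesis by (simp add: subset_weight_def power_add)
  qed
  have "(\<Sum>U | U \<subseteq> S \<and> U \<inter> E = T. subset_weight q S U)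
      = (\<Sum>V\<in>Pow (S - E). subset_weight q S (T \<union> V))"
    by (simp add: sum.reindex[OF inj] flip: image)
  also have "\<dots> = q ^ card T * (1 - q) ^ card (E - T)"
    using total by (simp add: weight flip: sum_distrib_left)
  finally show ?thesis .
qed

lemma sum_subset_weight_card:
  assumes "finite S"
  shows "(\<Sum>U\<in>Pow S. subset_weight q S U * card U) = q * card S"
proof -
  have "(\<Sum>U\<in>Pow S. subset_weight q S U * card U)
      = (\<Sum>U\<in>Pow S. \<Sum>A | A \<in> S \<and> A \<in> U. subset_weight q S U)"
  proof (rule sum.cong[OF refl])
    fix U assume "U \<in> Pow S"
    then have "{A. A \<in> S \<and> A \<in> U} = U" by auto
    then show "subset_weight q S U * card U = (\<Sum>A | A \<in> S \<and> A \<in> U. subset_weight q S U)"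
      by simp
  qed
  also have "\<dots> = (\<Sum>A\<in>S. \<Sum>U | U \<in> Pow S \<and> A \<in> U. subset_weight q S U)"
    using assms by (intro sum.swap_restrict) auto
  also have "\<dots> = (\<Sum>A\<in>S. q)"
  proof (rule sum.cong[OF refl])
    fix A assume "A \<in> S"
    then have "(\<Sum>U | U \<subseteq> S \<and> U \<inter> {A} = {A}. subset_weight q S U) = q"
      using sum_subset_weight_trace[OF assms, of "{A}" "{A}"] by simp
    moreover have "{U. U \<in> Pow S \<and> A \<in> U} = {U. U \<subseteq> S \<and> U \<inter> {A} = {A}}" by auto
    ultimately show "(\<Sum>U | U \<in> Pow S \<and> A \<in> U. subset_weight q S U) = q" by simp
  qed
  finally show ?thesis by simp
qed

lemma sum_subset_weight_trace_ge:
  assumes "finite S" "finite E" "T \<subseteq> E \<inter> S" "card E \<le> k" "1 \<le> k" "0 \<le> q"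
    and "real k * q \<le> 1 / 2"
  shows "(\<Sum>U | U \<subseteq> S \<and> U \<inter> E = T. subset_weight q S U) \<ge> q ^ card T / 2"
proof -
  have "card (E \<inter> S - T) \<le> card E"
    using assms(2) by (intro card_mono) auto
  then have "card (E \<inter> S - T) \<le> k"
    using assms(4) by linarith
  have q1: "q \<le> 1"
    using assms(5-7) mult_right_mono[of 1 "real k" q] by simp
  have "1 / 2 \<le> 1 - real k * q" using assms(7) by simp
  also have "\<dots> \<le> (1 - q) ^ k"
    using Bernoulli_inequality[of "- q" k] q1 by simp
  also have "\<dots> \<le> (1 - q) ^ card (E \<inter> S - T)"
    using \<open>card (E \<inter> S - T) \<le> k\<close> assms(6) q1 by (intro power_decreasing) auto
  finally have "q ^ card T * (1 / 2) \<le> q ^ card T * (1 - q) ^ card (E \<inter> S - T)"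
    using assms(6) by (intro mult_left_mono) auto
  moreover have "{U. U \<subseteq> S \<and> U \<inter> E = T} = {U. U \<subseteq> S \<and> U \<inter> (E \<inter> S) = T}"
    by auto
  ultimately show ?thesis
    using sum_subset_weight_trace[OF assms(1) _ assms(3), of q] by simp
qed

lemma card_delaunay_edges_restrict_le:
  assumes "hered_c_linear_delaunay c V E" "U \<subseteq> V"
  shows "real (card (delaunay_edges (restrict_hg E U))) \<le> c * card U"
proof (cases "U = {}")
  case True
  then have "delaunay_edges (restrict_hg E U) = {}"
    by (auto simp: delaunay_edges_def restrict_hg_def)
  then show ?thesis using True by simp
next
  case False
  then show ?thesis
    using assms less_imp_le unfolding hered_c_linear_delaunay_def by blast
qed

lemma card_ordered_pairs_le_double:
  assumes "finite D"
  shows "card {(a, b). a \<noteq> b \<and> {a, b} \<in> D} \<le> 2 * card D"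
proof -
  have pairs: "{(a, b). a \<noteq> b \<and> {a, b} \<in> D} = (\<Union>P\<in>D. {(a, b). a \<noteq> b \<and> {a, b} = P})"
    by auto
  have card_le: "card {(a, b). a \<noteq> b \<and> {a, b} = P} \<le> 2" for P :: "'a set"
  proof (cases "\<exists>u v. u \<noteq> v \<and> P = {u, v}")
    case True
    then obtain u v where "u \<noteq> v" "P = {u, v}" by blast
    then have "{(a, b). a \<noteq> b \<and> {a, b} = P} = {(u, v), (v, u)}"
      by (auto simp: doubleton_eq_iff)
    then show ?thesis by (simp add: card_insert_le_m1)
  next
    case False
    then have "{(a, b). a \<noteq> b \<and> {a, b} = P} = {}" by blast
    then show ?thesis by (metis card.empty le0)
  qed
  have "card {(a, b). a \<noteq> b \<and> {a, b} \<in> D} \<le> (\<Sum>P\<in>D. card {(a, b). a \<noteq> b \<and> {a, b} = P})"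
    unfolding pairs using assms by (rule card_UN_le)
  also have "\<dots> \<le> 2 * card D"
    using sum_bounded_above[of D "\<lambda>P. card {(a, b). a \<noteq> b \<and> {a, b} = P}" 2] card_le by simp
  finally show ?thesis .
qed

lemma card_traced_pairs_le:
  assumes "hered_c_linear_delaunay c V E" "U \<subseteq> V" "finite U"
    and "P \<subseteq> {(a, b). a \<noteq> b \<and> (\<exists>e\<in>E. e \<inter> U = {a, b})}"
  shows "real (card P) \<le> 2 * c * card U"
proof -
  let ?D = "delaunay_edges (restrict_hg E U)"
  have D_Pow: "?D \<subseteq> Pow U"
    by (auto simp: delaunay_edges_def restrict_hg_def)
  then have "finite ?D"
    using assms(3) by (simp add: finite_subset)
  have "{(a, b). a \<noteq> b \<and> {a, b} \<in> ?D} \<subseteq> U \<times> U"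
    using D_Pow by auto
  then have "finite {(a, b). a \<noteq> b \<and> {a, b} \<in> ?D}"
    using assms(3) finite_subset by blast
  moreover have "P \<subseteq> {(a, b). a \<noteq> b \<and> {a, b} \<in> ?D}"
  proof clarify
    fix a b assume "(a, b) \<in> P"
    then obtain e where "a \<noteq> b" "e \<in> E" "e \<inter> U = {a, b}"
      using assms(4) by blast
    then show "a \<noteq> b \<and> {a, b} \<in> ?D"
      unfolding delaunay_edges_def restrict_hg_def by auto
  qed
  ultimately have "card P \<le> card {(a, b). a \<noteq> b \<and> {a, b} \<in> ?D}"
    by (rule card_mono)
  also have "\<dots> \<le> 2 * card ?D"
    using \<open>finite ?D\<close> by (rule card_ordered_pairs_le_double)
  finally show ?thesis
    using card_delaunay_edges_restrict_le[OF assms(1,2)] by linarith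
qed

(* Double counting of the expected number of elements of P hit by the random subset. *)
lemma card_le_by_sampling:
  fixes \<alpha> \<beta> q :: real and hit :: "'a set \<Rightarrow> 'b \<Rightarrow> bool"
  assumes "finite S" "finite P" "0 \<le> q" "q \<le> 1"
    and lower: "\<And>\<pi>. \<pi> \<in> P \<Longrightarrow> \<alpha> \<le> (\<Sum>U | U \<in> Pow S \<and> hit U \<pi>. subset_weight q S U)"
    and upper: "\<And>U. U \<subseteq> S \<Longrightarrow> real (card {\<pi> \<in> P. hit U \<pi>}) \<le> \<beta> * card U"
  shows "card P * \<alpha> \<le> \<beta> * q * card S"
proof -
  have "card P * \<alpha> \<le> (\<Sum>\<pi>\<in>P. \<Sum>U | U \<in> Pow S \<and> hit U \<pi>. subset_weight q S U)"
    using sum_mono[OF lower] by simp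
  also have "\<dots> = (\<Sum>U\<in>Pow S. \<Sum>\<pi> | \<pi> \<in> P \<and> hit U \<pi>. subset_weight q S U)"
    using assms(1,2) by (intro sum.swap_restrict) auto
  also have "\<dots> = (\<Sum>U\<in>Pow S. subset_weight q S U * card {\<pi> \<in> P. hit U \<pi>})"
    by (simp add: mult.commute)
  also have "\<dots> \<le> (\<Sum>U\<in>Pow S. subset_weight q S U * (\<beta> * card U))"
    using upper assms(3,4) by (intro sum_mono mult_left_mono) (auto simp: subset_weight_def)
  also have "\<dots> = \<beta> * (\<Sum>U\<in>Pow S. subset_weight q S U * card U)"
    by (simp add: sum_distrib_left mult_ac)
  also have "\<dots> = \<beta> * q * card S"
    by (simp add: sum_subset_weight_card[OF assms(1)])
  finally show ?thesis .
qed

definition shares_edge :: "'v set set \<Rightarrow> 'v \<Rightarrow> 'v \<Rightarrow> bool" where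
  "shares_edge E a b \<longleftrightarrow> (\<exists>e\<in>E. a \<in> e \<and> b \<in> e)"

lemma card_pairs_sharing_edge_le:
  fixes c :: real
  assumes hered: "hered_c_linear_delaunay c V E" and "finite V"
    and edges: "\<forall>e\<in>E. e \<subseteq> V \<and> card e \<le> k" and "1 \<le> k" and "S \<subseteq> V"
  shows "real (card {(a, b) \<in> S \<times> S. a \<noteq> b \<and> shares_edge E a b}) \<le> 8 * c * k * card S"
proof -
  define q :: real where "q = 1 / (2 * k)"
  define pairs where "pairs = {(a, b) \<in> S \<times> S. a \<noteq> b \<and> shares_edge E a b}"
  have "\<forall>\<pi>\<in>pairs. \<exists>e\<in>E. fst \<pi> \<in> e \<and> snd \<pi> \<in> e"
    unfolding pairs_def shares_edge_def by auto
  then obtain edge where edge: "\<And>\<pi>. \<pi> \<in> pairs \<Longrightarrow> edge \<pi> \<in> E \<and> fst \<pi> \<in> edge \<pi> \<and> snd \<pi> \<in> edge \<pi>"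
    by metis
  define hit where "hit U \<pi> \<longleftrightarrow> U \<inter> edge \<pi> = {fst \<pi>, snd \<pi>}" for U \<pi>
  have "finite S" using assms finite_subset by blast
  have q: "0 < q" "real k * q = 1 / 2" "q \<le> 1"
    using \<open>1 \<le> k\<close> by (auto simp: q_def)
  have "card pairs * (q ^ 2 / 2) \<le> 2 * c * q * card S"
  proof (rule card_le_by_sampling[where hit = hit])
    show "finite pairs"
      using \<open>finite S\<close> unfolding pairs_def by (auto intro: finite_subset[of _ "S \<times> S"])
  next
    fix \<pi> assume "\<pi> \<in> pairs"
    then have "edge \<pi> \<subseteq> V" "card (edge \<pi>) \<le> k" "card {fst \<pi>, snd \<pi>} = 2"
      "{fst \<pi>, snd \<pi>} \<subseteq> edge \<pi> \<inter> S"
      using edge[OF \<open>\<pi> \<in> pairs\<close>] edges unfolding pairs_def by auto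
    moreover have "finite (edge \<pi>)"
      using \<open>edge \<pi> \<subseteq> V\<close> \<open>finite V\<close> finite_subset by blast
    moreover have "{U. U \<in> Pow S \<and> hit U \<pi>} = {U. U \<subseteq> S \<and> U \<inter> edge \<pi> = {fst \<pi>, snd \<pi>}}"
      unfolding hit_def by auto
    ultimately show "q ^ 2 / 2 \<le> (\<Sum>U | U \<in> Pow S \<and> hit U \<pi>. subset_weight q S U)"
      using sum_subset_weight_trace_ge[OF \<open>finite S\<close> \<open>finite (edge \<pi>)\<close> _ _ \<open>1 \<le> k\<close>,
          of "{fst \<pi>, snd \<pi>}" q] q
      by simp
  next
    fix U assume "U \<subseteq> S"
    have "{\<pi> \<in> pairs. hit U \<pi>} \<subseteq> {(a, b). a \<noteq> b \<and> (\<exists>e\<in>E. e \<inter> U = {a, b})}"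
    proof clarify
      fix a b assume "(a, b) \<in> pairs" "hit U (a, b)"
      then have "a \<noteq> b" "edge (a, b) \<in> E" "edge (a, b) \<inter> U = {a, b}"
        using edge[of "(a, b)"] unfolding pairs_def hit_def by auto
      then show "a \<noteq> b \<and> (\<exists>e\<in>E. e \<inter> U = {a, b})" by blast
    qed
    then show "real (card {\<pi> \<in> pairs. hit U \<pi>}) \<le> 2 * c * card U"
      using \<open>U \<subseteq> S\<close> assms \<open>finite S\<close> finite_subset
      by (intro card_traced_pairs_le[OF hered]) auto
  qed (use \<open>finite S\<close> q in auto)
  then have "card pairs \<le> 4 * c * card S / q"
    using q(1) by (simp add: pos_le_divide_eq power2_eq_square field_simps)
  also have "\<dots> = 8 * c * k * card S"
    by (simp add: q_def)
  finally show ?thesis unfolding pairs_def .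
qed

lemma exists_degree_le_average:
  fixes D :: real
  assumes "finite S" "S \<noteq> {}" "real (card {(a, b) \<in> S \<times> S. a \<noteq> b \<and> R a b}) \<le> D * card S"
  shows "\<exists>a\<in>S. real (card {b \<in> S. a \<noteq> b \<and> R a b}) \<le> D"
proof (rule ccontr)
  assume "\<not> ?thesis"
  then have "(\<Sum>a\<in>S. D) < (\<Sum>a\<in>S. real (card {b \<in> S. a \<noteq> b \<and> R a b}))"
    using assms(1,2) by (intro sum_strict_mono) auto
  also have "\<dots> = card (SIGMA a:S. {b \<in> S. a \<noteq> b \<and> R a b})"
    using assms(1) by simp
  also have "(SIGMA a:S. {b \<in> S. a \<noteq> b \<and> R a b}) = {(a, b) \<in> S \<times> S. a \<noteq> b \<and> R a b}"
    by auto
  finally show False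
    using assms(3) by (simp add: mult.commute)
qed

lemma exists_independent_set_if_sparse:
  fixes R :: "'a \<Rightarrow> 'a \<Rightarrow> bool" and D :: real
  assumes "finite V" "symp R"
    and sparse: "\<And>S. S \<subseteq> V \<Longrightarrow> real (card {(a, b) \<in> S \<times> S. a \<noteq> b \<and> R a b}) \<le> D * card S"
  shows "\<exists>I\<subseteq>V. pairwise (\<lambda>a b. \<not> R a b) I \<and> card V \<le> (D + 1) * card I"
  using assms(1) sparse
proof (induction "card V" arbitrary: V rule: less_induct)
  case less
  show ?case
  proof (cases "V = {}")
    case True
    then show ?thesis by auto
  next
    case False
    then obtain a where a: "a \<in> V" "real (card {b \<in> V. a \<noteq> b \<and> R a b}) \<le> D"
      using exists_degree_le_average[OF less.prems(1) False less.prems(2)[OF order_refl]] by blast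
    define N where "N = {b \<in> V. a \<noteq> b \<and> R a b}"
    define V' where "V' = V - insert a N"
    have "V' \<subset> V" using a(1) unfolding V'_def by auto
    then have "card V' < card V" "finite V'"
      using less.prems(1) by (auto intro: psubset_card_mono finite_subset)
    moreover have "real (card {(a, b) \<in> S \<times> S. a \<noteq> b \<and> R a b}) \<le> D * card S" if "S \<subseteq> V'" for S
      using that \<open>V' \<subset> V\<close> less.prems(2) by blast
    ultimately obtain I' where I': "I' \<subseteq> V'" "pairwise (\<lambda>a b. \<not> R a b) I'"
      "card V' \<le> (D + 1) * card I'"
      using less.hyps by blast
    have "a \<notin> I'" "\<forall>b\<in>I'. \<not> R a b" using I'(1) unfolding V'_def N_def by auto
    then have "pairwise (\<lambda>a b. \<not> R a b) (insert a I')"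
      using I'(2) \<open>symp R\<close> by (auto simp: pairwise_insert dest: sympD)
    moreover have "card V \<le> card V' + card N + 1"
    proof -
      have "V \<subseteq> V' \<union> insert a N" unfolding V'_def by auto
      then have "card V \<le> card (V' \<union> insert a N)"
        using \<open>finite V'\<close> less.prems(1) by (intro card_mono) (auto simp: N_def)
      also have "\<dots> \<le> card V' + card (insert a N)" by (rule card_Un_le)
      also have "\<dots> \<le> card V' + card N + 1"
        using less.prems(1) by (simp add: card_insert_if N_def)
      finally show ?thesis .
    qed
    moreover have "card (insert a I') = card I' + 1"
      using \<open>a \<notin> I'\<close> I'(1) \<open>finite V'\<close> by (simp add: finite_subset)
    moreover have "insert a I' \<subseteq> V"
      using I'(1) a(1) \<open>V' \<subset> V\<close> by blast
    ultimately show ?thesis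
      using I'(3) a(2) unfolding N_def by (intro exI[of _ "insert a I'"]) (auto simp: algebra_simps)
  qed
qed

lemma exists_large_independent_set:
  fixes c :: real
  assumes "hered_c_linear_delaunay c V E" "finite V" "\<forall>e\<in>E. e \<subseteq> V \<and> card e \<le> k" "1 \<le> k"
  shows "\<exists>I\<subseteq>V. pairwise (\<lambda>a b. \<not> shares_edge E a b) I \<and> card V \<le> (8 * c * k + 1) * card I"
proof (rule exists_independent_set_if_sparse)
  show "symp (shares_edge E)" by (auto simp: symp_def shares_edge_def)
  show "real (card {(a, b) \<in> S \<times> S. a \<noteq> b \<and> shares_edge E a b}) \<le> 8 * c * k * card S"
    if "S \<subseteq> V" for S
    using card_pairs_sharing_edge_le[OF assms that] by simp
qed (rule assms(2))

lemma shares_dual_edge_iff: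
  assumes "A \<in> F" "B \<in> F" "A \<subseteq> Rn d"
  shows "shares_edge (dual_edges d F) A B \<longleftrightarrow> A \<inter> B \<noteq> {}"
  using assms by (auto simp: shares_edge_def dual_edges_def)

lemma card_less_if_p2_property:
  assumes "p2_property p F" "I \<subseteq> F" "pairwise disjnt I"
  shows "card I < p"
proof (rule ccontr)
  assume "\<not> card I < p"
  then obtain G where G: "G \<subseteq> I" "card G = p"
    using obtain_subset_with_card_n[of p I] by auto
  then have "\<exists>A\<in>G. \<exists>B\<in>G. A \<noteq> B \<and> A \<inter> B \<noteq> {}"
    using assms(1,2) unfolding p2_property_def by auto
  then show False
    using assms(3) G(1) unfolding pairwise_def disjnt_def by blast
qed

lemma exists_large_disjoint_subfamily:
  fixes c :: real
  assumes "hered_c_linear_delaunay c F (dual_edges d F)" "finite F" "\<forall>B\<in>F. B \<subseteq> Rn d"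
    and "\<forall>x\<in>Rn d. card {B \<in> F. x \<in> B} \<le> k" "1 \<le> k"
  shows "\<exists>I\<subseteq>F. pairwise disjnt I \<and> card F \<le> (8 * c * k + 1) * card I"
proof -
  have "\<forall>e\<in>dual_edges d F. e \<subseteq> F \<and> card e \<le> k"
    using assms(4) by (auto simp: dual_edges_def)
  then obtain I where I: "I \<subseteq> F" "pairwise (\<lambda>A B. \<not> shares_edge (dual_edges d F) A B) I"
    "card F \<le> (8 * c * k + 1) * card I"
    using exists_large_independent_set[OF assms(1,2) _ assms(5)] by blast
  have "pairwise disjnt I"
  proof (rule pairwiseI)
    fix A B assume "A \<in> I" "B \<in> I" "A \<noteq> B"
    then have "\<not> shares_edge (dual_edges d F) A B"
      using I(2) by (simp add: pairwise_def)
    then show "disjnt A B"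
      using shares_dual_edge_iff[of A F B d] assms(3) I(1) \<open>A \<in> I\<close> \<open>B \<in> I\<close>
      by (auto simp: disjnt_def)
  qed
  then show ?thesis using I(1,3) by blast
qed

lemma exists_deepest_point:
  assumes "finite F" "F \<noteq> {}" "\<forall>B\<in>F. B \<noteq> {} \<and> B \<subseteq> Rn d"
  obtains x where "x \<in> Rn d" "1 \<le> card {B \<in> F. x \<in> B}"
    "\<forall>y\<in>Rn d. card {B \<in> F. y \<in> B} \<le> card {B \<in> F. x \<in> B}"
proof -
  let ?depth = "\<lambda>y. card {B \<in> F. y \<in> B}"
  have "?depth ` Rn d \<subseteq> {..card F}"
    using assms(1) by (auto intro: card_mono)
  then have fin: "finite (?depth ` Rn d)"
    using finite_subset by blast
  obtain B b where "B \<in> F" "b \<in> B" using assms(2,3) by blast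
  then have "b \<in> Rn d" "1 \<le> ?depth b"
    using assms by (auto simp: Suc_le_eq card_gt_0_iff)
  then have "Max (?depth ` Rn d) \<in> ?depth ` Rn d" "1 \<le> Max (?depth ` Rn d)"
    using fin by (auto intro: Max_in le_trans[OF _ Max_ge])
  then obtain x where "x \<in> Rn d" "?depth x = Max (?depth ` Rn d)" "1 \<le> ?depth x"
    by auto
  moreover have "\<forall>y\<in>Rn d. ?depth y \<le> Max (?depth ` Rn d)"
    using fin by simp
  ultimately show ?thesis
    using that by simp
qed

theorem mainTheorem5:
  fixes c :: real
  assumes "c > 0"
  shows "\<exists>\<delta>::real. \<delta> > 0 \<and>
    (\<forall>(d::nat) (p::nat) (n::nat) (F :: (nat \<Rightarrow> real) set set).
       1 \<le> d \<and> 2 \<le> p \<and> 1 \<le> n \<and> finite F \<and> card F = n \<and>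
       (\<forall>B\<in>F. B \<noteq> {} \<and> B \<subseteq> Rn d) \<and>
       hered_c_linear_delaunay c F (dual_edges d F) \<and>
       p2_property p F
       \<longrightarrow> (\<exists>x\<in>Rn d. real (card {B \<in> F. x \<in> B}) \<ge> \<delta> * real n / real p))"
proof (intro exI[of _ "1 / (8 * c + 1)"] conjI allI impI)
  show "1 / (8 * c + 1) > 0" using assms by simp
next
  fix d p n :: nat and F :: "(nat \<Rightarrow> real) set set"
  assume "1 \<le> d \<and> 2 \<le> p \<and> 1 \<le> n \<and> finite F \<and> card F = n \<and>
       (\<forall>B\<in>F. B \<noteq> {} \<and> B \<subseteq> Rn d) \<and>
       hered_c_linear_delaunay c F (dual_edges d F) \<and> p2_property p F"
  then have "2 \<le> p" "1 \<le> n" "finite F" "card F = n" and members: "\<forall>B\<in>F. B \<noteq> {} \<and> B \<subseteq> Rn d"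
    and hered: "hered_c_linear_delaunay c F (dual_edges d F)" and "p2_property p F"
    by blast+
  have "F \<noteq> {}"
    using \<open>card F = n\<close> \<open>1 \<le> n\<close> by auto
  obtain x where x: "x \<in> Rn d" "1 \<le> card {B \<in> F. x \<in> B}"
    "\<forall>y\<in>Rn d. card {B \<in> F. y \<in> B} \<le> card {B \<in> F. x \<in> B}"
    using exists_deepest_point[OF \<open>finite F\<close> \<open>F \<noteq> {}\<close> members] by blast
  define k where "k = card {B \<in> F. x \<in> B}"
  have "\<forall>B\<in>F. B \<subseteq> Rn d" using members by blast
  then obtain I where I: "I \<subseteq> F" "pairwise disjnt I" "card F \<le> (8 * c * k + 1) * card I"
    using exists_large_disjoint_subfamily[OF hered \<open>finite F\<close> _ x(3) x(2)] unfolding k_def by blast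
  have "card I \<le> p"
    using card_less_if_p2_property[OF \<open>p2_property p F\<close> I(1,2)] by simp
  then have "(8 * c * k + 1) * card I \<le> (8 * c * k + 1) * p"
    using assms by (intro mult_left_mono) auto
  also have "\<dots> \<le> (8 * c + 1) * k * p"
    using x(2) assms unfolding k_def by (intro mult_right_mono) (auto simp: algebra_simps)
  finally have "n / ((8 * c + 1) * p) \<le> k"
    using I(3) \<open>card F = n\<close> \<open>2 \<le> p\<close> assms by (simp add: pos_divide_le_eq mult_ac)
  then show "\<exists>x\<in>Rn d. real (card {B \<in> F. x \<in> B}) \<ge> 1 / (8 * c + 1) * real n / real p"
    using x(1) unfolding k_def by auto
qed

end
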